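(* For every integer $n\ge1$, the monomials $u^iv^jw^{n-i-j}$ occurring with nonzero coefficient in $P_{1/n}(u,v,w)$ are exactly those with $(i,j)\in\mathbb{Z}^2$, $i,j\ge0$, $i+\frac{j}{n}\ge1$ and $i+j\le n$.
   Context: Markov polynomials. Let $x,y,z$ be indeterminates. Consider the set consisting of all rationals $\rho\in[0,1]$, each written in lowest terms $\rho=a/b$ with integers $a\ge 0$, $b\ge 1$, together with the formal symbol $1/0$. Define Laurent polynomials $M_\rho(x,y,z)$ recursively by $M_{1/0}=y$, $M_{0/1}=x$, $M_{1/1}=\frac{x^2+y^2}{z}$, and: whenever $a/b$, $c/d$ are in this set with $|ad-bc|=1$ and $(a+2c)/(b+2d)\in[0,1]$, then $M_{\frac{a+2c}{b+2d}}=\big(M_{c/d}^2+M_{\frac{a+c}{b+d}}^2\big)/M_{a/b}$. This determines $M_\rho$ for every rational $\rho\in[0,1]$. Numerator. For coprime $1\le a\le b$, $P_{a/b}(u,v,w)$ denotes the homogeneous polynomial of degree $a+b-1$ such that $M_{a/b}(x,y,z)=P_{a/b}(x^2,y^2,z^2)/(x^{a-1}y^{b-1}z^{a+b-1})$; its existence is known. *)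

theory Defs
  imports "HOL-Computational_Algebra.Polynomial"
begin

text \<open>Markov Laurent polynomials along the branch 1/n, evaluated at positive reals
  (a Laurent polynomial is determined by its values on the positive orthant).
  Markov_inv n x y z = M_{1/n}(x,y,z); index 0 stands for the symbol 1/0.
  The recursion is the defining rule applied with a/b = 1/n, c/d = 0/1,
  so (a+c)/(b+d) = 1/(n+1) and (a+2c)/(b+2d) = 1/(n+2).\<close>
fun Markov_inv :: "nat \<Rightarrow> real \<Rightarrow> real \<Rightarrow> real \<Rightarrow> real" where
  "Markov_inv 0 x y z = y"
| "Markov_inv (Suc 0) x y z = (x^2 + y^2) / z"
| "Markov_inv (Suc (Suc n)) x y z =
     (x^2 + (Markov_inv (Suc n) x y z)^2) / Markov_inv n x y z"

text \<open>Polynomials in three variables u, v, w as nested univariate polynomials: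
  the outer variable is u, then v, innermost w.\<close>
definition eval3 :: "real poly poly poly \<Rightarrow> real \<Rightarrow> real \<Rightarrow> real \<Rightarrow> real" where
  "eval3 P u v w = poly (map_poly (\<lambda>q. poly (map_poly (\<lambda>r. poly r w) q) v) P) u"

definition mcoeff :: "real poly poly poly \<Rightarrow> nat \<Rightarrow> nat \<Rightarrow> nat \<Rightarrow> real" where
  "mcoeff P i j k = coeff (coeff (coeff P i) j) k"

definition P_inv :: "nat \<Rightarrow> real poly poly poly" where
  "P_inv n = (THE P. \<forall>x y z. x > 0 \<longrightarrow> y > 0 \<longrightarrow> z > 0 \<longrightarrow>
       Markov_inv n x y z = eval3 P (x^2) (y^2) (z^2) / (y^(n-1) * z^n))"

end

theory Submission
  imports Defs
begin

text \<open>Write p(n) for P_{1/n}. Along the branch 1/n the exchange relation is equivalent to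
  the Cassini identity p(n+2) p(n) - p(n+1)^2 = u w (v w)^n, which holds for the solution of
  the linear recurrence p(n+2) = (u + v + w) p(n+1) - v w p(n) with p(0) = 1, p(1) = u + v.
  Splitting off a(n) = p(n) - v p(n-1) rewrites this recurrence without subtraction,
  p(n+1) = (u + v) p(n) + w a(n) and a(n+1) = u p(n) + w a(n), so all coefficients are
  nonnegative and the supports follow by induction without cancellation: a(n) has exactly
  the monomials of degree n divisible by u, and p(n) in addition v^n.\<close>

lemma map_poly_add:
  assumes "f 0 = 0" "\<And>a b. f (a + b) = f a + f b"
  shows "map_poly f (p + q) = map_poly f p + map_poly f q"
  by (intro poly_eqI) (simp add: coeff_map_poly assms)

lemma eval3_add[simp]: "eval3 (P + Q) u v w = eval3 P u v w + eval3 Q u v w"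
  unfolding eval3_def by (simp add: map_poly_add)

lemma eval3_0 [simp]: "eval3 0 u v w = 0"
  by (simp add: eval3_def)

lemma eval3_1 [simp]: "eval3 1 u v w = 1"
  by (simp add: eval3_def)

definition mult_u :: "real poly poly poly \<Rightarrow> real poly poly poly" where
  "mult_u P = pCons 0 P"

definition mult_v :: "real poly poly poly \<Rightarrow> real poly poly poly" where
  "mult_v P = map_poly (pCons 0) P"

definition mult_w :: "real poly poly poly \<Rightarrow> real poly poly poly" where
  "mult_w P = map_poly (map_poly (pCons 0)) P"

lemma eval3_mult_u[simp]: "eval3 (mult_u P) u v w = u * eval3 P u v w"
  unfolding eval3_def mult_u_def by (simp add: map_poly_pCons)

lemma eval3_mult_v[simp]: "eval3 (mult_v P) u v w = v * eval3 P u v w"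
proof -
  let ?ev = "\<lambda>q. poly (map_poly (\<lambda>r. poly r w) q) v"
  have "map_poly ?ev (map_poly (pCons 0) P) = smult v (map_poly ?ev P)"
    by (intro poly_eqI) (simp add: coeff_map_poly map_poly_pCons)
  then show ?thesis
    unfolding eval3_def mult_v_def by simp
qed

lemma eval3_mult_w[simp]: "eval3 (mult_w P) u v w = w * eval3 P u v w"
proof -
  let ?ev = "\<lambda>q. poly (map_poly (\<lambda>r. poly r w) q) v"
  have "map_poly (\<lambda>r. poly r w) (map_poly (pCons 0) q) = smult w (map_poly (\<lambda>r. poly r w) q)"
    for q :: "real poly poly"
    by (intro poly_eqI) (simp add: coeff_map_poly)
  then have "map_poly ?ev (map_poly (map_poly (pCons 0)) P) = smult w (map_poly ?ev P)"
    by (intro poly_eqI) (simp add: coeff_map_poly)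
  then show ?thesis
    unfolding eval3_def mult_w_def by simp
qed

lemma mcoeff_add: "mcoeff (P + Q) i j k = mcoeff P i j k + mcoeff Q i j k"
  unfolding mcoeff_def by simp

lemma mcoeff_mult_u: "mcoeff (mult_u P) i j k = (if i = 0 then 0 else mcoeff P (i - 1) j k)"
  unfolding mcoeff_def mult_u_def by (cases i) auto

lemma mcoeff_mult_v: "mcoeff (mult_v P) i j k = (if j = 0 then 0 else mcoeff P i (j - 1) k)"
  unfolding mcoeff_def mult_v_def by (cases j) (auto simp: coeff_map_poly)

lemma mcoeff_mult_w: "mcoeff (mult_w P) i j k = (if k = 0 then 0 else mcoeff P i j (k - 1))"
  unfolding mcoeff_def mult_w_def by (cases k) (auto simp: coeff_map_poly)

lemma poly_eqI_infinite:
  fixes p q :: "'a::idom poly"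
  assumes "infinite S" "\<And>x. x \<in> S \<Longrightarrow> poly p x = poly q x"
  shows "p = q"
proof (rule ccontr)
  assume "p \<noteq> q"
  then have "finite {x. poly (p - q) x = 0}"
    by (intro poly_roots_finite) simp
  moreover have "S \<subseteq> {x. poly (p - q) x = 0}"
    using assms(2) by auto
  ultimately show False
    using assms(1) finite_subset by blast
qed

lemma eval3_eqI_pos:
  assumes "\<And>u v w. u > 0 \<Longrightarrow> v > 0 \<Longrightarrow> w > 0 \<Longrightarrow> eval3 P u v w = eval3 Q u v w"
  shows "P = Q"
proof -
  have inf: "infinite {0::real<..}"
    by (rule infinite_Ioi)
  have u_coeffs: "poly (map_poly (\<lambda>r. poly r w) (coeff P i)) v
      = poly (map_poly (\<lambda>r. poly r w) (coeff Q i)) v" if "v > 0" "w > 0" for v w i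
  proof -
    let ?ev = "\<lambda>q. poly (map_poly (\<lambda>r. poly r w) q) v"
    have "map_poly ?ev P = map_poly ?ev Q"
      by (rule poly_eqI_infinite[OF inf]) (use assms that in \<open>simp add: eval3_def\<close>)
    then show ?thesis
      by (metis (no_types, lifting) coeff_map_poly map_poly_0 poly_0)
  qed
  have v_coeffs: "poly (coeff (coeff P i) j) w = poly (coeff (coeff Q i) j) w" if "w > 0" for w i j
  proof -
    have "map_poly (\<lambda>r. poly r w) (coeff P i) = map_poly (\<lambda>r. poly r w) (coeff Q i)"
      by (rule poly_eqI_infinite[OF inf]) (use u_coeffs that in simp)
    then show ?thesis
      by (metis coeff_map_poly poly_0)
  qed
  have "coeff (coeff P i) j = coeff (coeff Q i) j" for i j
    by (rule poly_eqI_infinite[OF inf]) (use v_coeffs in simp)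
  then show ?thesis
    by (intro poly_eqI) simp
qed

text \<open>These are p(n) and a(n) of the recurrence above.\<close>
fun markov_numer :: "nat \<Rightarrow> real poly poly poly"
  and markov_numer_aux :: "nat \<Rightarrow> real poly poly poly" where
  "markov_numer 0 = 1"
| "markov_numer (Suc n) =
     mult_u (markov_numer n) + mult_v (markov_numer n) + mult_w (markov_numer_aux n)"
| "markov_numer_aux 0 = 0"
| "markov_numer_aux (Suc n) = mult_u (markov_numer n) + mult_w (markov_numer_aux n)"

lemma eval3_markov_numer_rec:
  "eval3 (markov_numer (Suc (Suc n))) u v w
     = (u + v + w) * eval3 (markov_numer (Suc n)) u v w - v * w * eval3 (markov_numer n) u v w"
  by (simp add: algebra_simps)

lemma eval3_markov_numer_pos:
  assumes "u > 0" "v > 0" "w > 0"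
  shows "eval3 (markov_numer n) u v w > 0 \<and> eval3 (markov_numer_aux n) u v w \<ge> 0"
proof (induction n)
  case 0
  then show ?case
    by simp
next
  case (Suc n)
  then show ?case
    using assms by (simp add: add_pos_nonneg add_nonneg_nonneg)
qed

lemma cassini_identity:
  fixes p :: "nat \<Rightarrow> 'a::comm_ring_1"
  assumes "\<And>n. p (Suc (Suc n)) = s * p (Suc n) - t * p n"
  shows "p (Suc (Suc n)) * p n - p (Suc n) ^ 2 = t ^ n * (p 2 * p 0 - p 1 ^ 2)"
proof (induction n)
  case 0
  then show ?case
    by (simp add: numeral_2_eq_2)
next
  case (Suc n)
  have "p (Suc (Suc (Suc n))) * p (Suc n) - p (Suc (Suc n)) ^ 2
      = t * (p (Suc (Suc n)) * p n - p (Suc n) ^ 2)"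
    unfolding assms[of "Suc n"] assms[of n] by (simp add: algebra_simps power2_eq_square)
  then show ?case
    using Suc.IH by simp
qed

lemma eval3_markov_numer_cassini:
  "eval3 (markov_numer (Suc (Suc n))) u v w * eval3 (markov_numer n) u v w
     = eval3 (markov_numer (Suc n)) u v w ^ 2 + u * w * (v * w) ^ n"
proof -
  let ?p = "\<lambda>n. eval3 (markov_numer n) u v w"
  have "?p 0 = 1" "?p 1 = u + v" "?p 2 = (u + v) ^ 2 + u * w"
    by (simp_all add: numeral_2_eq_2 power2_eq_square algebra_simps)
  then show ?thesis
    using cassini_identity[of ?p "u + v + w" "v * w" n] eval3_markov_numer_rec
    by (simp add: algebra_simps power2_eq_square)
qed

lemma Markov_inv_eq_markov_numer:
  assumes "x > 0" "y > 0" "z > 0"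
  shows "Markov_inv n x y z = y * eval3 (markov_numer n) (x^2) (y^2) (z^2) / (y^n * z^n)"
  using assms
proof (induction n x y z rule: Markov_inv.induct)
  case (1 x y z)
  then show ?case
    by simp
next
  case (2 x y z)
  then show ?case
    by (simp add: power2_eq_square field_simps)
next
  case (3 n x y z)
  define p0 p1 p2 where "p0 = eval3 (markov_numer n) (x^2) (y^2) (z^2)"
    and "p1 = eval3 (markov_numer (Suc n)) (x^2) (y^2) (z^2)"
    and "p2 = eval3 (markov_numer (Suc (Suc n))) (x^2) (y^2) (z^2)"
  have "p0 > 0"
    using eval3_markov_numer_pos 3 by (simp add: p0_def)
  have "p2 * p0 = p1 ^ 2 + x^2 * z^2 * (y^2 * z^2) ^ n"
    unfolding p0_def p1_def p2_def by (rule eval3_markov_numer_cassini)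
  then have p2_eq: "p2 = (p1 ^ 2 + x^2 * z^2 * (y^2 * z^2) ^ n) / p0"
    using \<open>p0 > 0\<close> by (simp add: field_simps)
  have "Markov_inv (Suc (Suc n)) x y z
      = (x^2 + (y * p1 / (y^Suc n * z^Suc n))^2) / (y * p0 / (y^n * z^n))"
    using 3 by (simp add: p0_def p1_def)
  also have "\<dots> = y * p2 / (y^Suc (Suc n) * z^Suc (Suc n))"
    unfolding p2_eq using \<open>p0 > 0\<close> 3(3-5)
    by (simp add: field_simps power2_eq_square power_mult_distrib)
  finally show ?case
    unfolding p2_def .
qed

lemma markov_numer_support:
  "mcoeff (markov_numer n) i j k \<ge> 0 \<and>
     (mcoeff (markov_numer n) i j k \<noteq> 0 \<longleftrightarrow> (i \<ge> 1 \<or> j = n) \<and> i + j + k = n)"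
  "mcoeff (markov_numer_aux n) i j k \<ge> 0 \<and>
     (mcoeff (markov_numer_aux n) i j k \<noteq> 0 \<longleftrightarrow> i \<ge> 1 \<and> i + j + k = n)"
proof (induction n and n arbitrary: i j k and i j k rule: markov_numer_markov_numer_aux.induct)
  case 1
  then show ?case
    by (simp add: mcoeff_def coeff_1)
next
  case (2 n)
  then show ?case
    by (cases i; cases j; cases k)
      (auto simp: mcoeff_add mcoeff_mult_u mcoeff_mult_v mcoeff_mult_w
        add_nonneg_eq_0_iff add_nonneg_nonneg)
next
  case 3
  then show ?case
    by (simp add: mcoeff_def)
next
  case (4 n)
  then show ?case
    by (cases i; cases k)
      (auto simp: mcoeff_add mcoeff_mult_u mcoeff_mult_w add_nonneg_eq_0_iff)
qed

lemma P_inv_eq_markov_numer: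
  assumes "n \<ge> 1"
  shows "P_inv n = markov_numer n"
  unfolding P_inv_def
proof (rule the_equality)
  show eq: "\<forall>x y z. x > 0 \<longrightarrow> y > 0 \<longrightarrow> z > 0 \<longrightarrow>
      Markov_inv n x y z = eval3 (markov_numer n) (x^2) (y^2) (z^2) / (y^(n - 1) * z^n)"
  proof (intro allI impI)
    fix x y z :: real
    assume pos: "x > 0" "y > 0" "z > 0"
    have "y^n = y * y^(n - 1)"
      using assms by (cases n) auto
    with pos show "Markov_inv n x y z
        = eval3 (markov_numer n) (x^2) (y^2) (z^2) / (y^(n - 1) * z^n)"
      unfolding Markov_inv_eq_markov_numer[OF pos] by simp
  qed
  fix Q
  assume Q: "\<forall>x y z. x > 0 \<longrightarrow> y > 0 \<longrightarrow> z > 0 \<longrightarrow>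
      Markov_inv n x y z = eval3 Q (x^2) (y^2) (z^2) / (y^(n - 1) * z^n)"
  show "Q = markov_numer n"
  proof (rule eval3_eqI_pos)
    fix u v w :: real
    assume "u > 0" "v > 0" "w > 0"
    then have pos: "sqrt u > 0" "sqrt v > 0" "sqrt w > 0"
      and sq: "sqrt u ^ 2 = u" "sqrt v ^ 2 = v" "sqrt w ^ 2 = w"
      by simp_all
    have "eval3 Q (sqrt u ^ 2) (sqrt v ^ 2) (sqrt w ^ 2) / (sqrt v ^ (n - 1) * sqrt w ^ n)
        = eval3 (markov_numer n) (sqrt u ^ 2) (sqrt v ^ 2) (sqrt w ^ 2)
            / (sqrt v ^ (n - 1) * sqrt w ^ n)"
      using Q eq pos by metis
    then have "eval3 Q u v w / (sqrt v ^ (n - 1) * sqrt w ^ n)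
        = eval3 (markov_numer n) u v w / (sqrt v ^ (n - 1) * sqrt w ^ n)"
      unfolding sq .
    then show "eval3 Q u v w = eval3 (markov_numer n) u v w"
      using pos by simp
  qed
qed

lemma one_le_add_div_iff:
  fixes i j n :: nat
  assumes "n \<ge> 1" "i + j \<le> n"
  shows "real i + real j / real n \<ge> 1 \<longleftrightarrow> i \<ge> 1 \<or> j = n"
proof (cases "i = 0")
  case True
  then show ?thesis
    using assms by (auto simp: le_divide_eq)
next
  case False
  then show ?thesis
    by (simp add: add_increasing2)
qed

theorem corollary5p3:
  fixes n :: nat
  assumes "n \<ge> 1"
  shows "\<forall>i j k. mcoeff (P_inv n) i j k \<noteq> 0 \<longleftrightarrow>
           (k = n - i - j \<and> i + j \<le> n \<and> real i + real j / real n \<ge> 1)"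
proof (intro allI)
  fix i j k
  have "mcoeff (P_inv n) i j k \<noteq> 0 \<longleftrightarrow> (i \<ge> 1 \<or> j = n) \<and> i + j + k = n"
    using markov_numer_support(1) P_inv_eq_markov_numer[OF assms] by simp
  then show "mcoeff (P_inv n) i j k \<noteq> 0 \<longleftrightarrow>
      (k = n - i - j \<and> i + j \<le> n \<and> real i + real j / real n \<ge> 1)"
    using one_le_add_div_iff[OF assms, of i j] by auto
qed

end
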